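(* Let $\Lambda,\Theta$ be Young functions with $\Lambda<\Theta$, and let $h\in L^1(\mathbb{R}^N)\cap L^\infty(\mathbb{R}^N)$. Then there exists $C=C(\Lambda,\Theta,\|h\|_1,\|h\|_\infty)>0$ such that $\|hu\|_\Lambda\le C\|u\|_\Theta$ for all $u\in L^\Theta(\mathbb{R}^N)$.
   Context: A Young function is a convex $\Lambda:[0,\infty)\to[0,\infty)$ with $\Lambda(t)=0$ iff $t=0$, $\lim_{t\to0^+}\Lambda(t)/t=0$ and $\lim_{t\to\infty}\Lambda(t)/t=\infty$. $\Lambda<\Theta$ means there exist $c,T>0$ with $\Lambda(t)\le\Theta(ct)$ for all $t\ge T$. $\|\cdot\|_\Lambda$ is the Luxemburg norm $\|u\|_\Lambda=\inf\{\tau>0:\int_{\mathbb{R}^N}\Lambda(|u|/\tau)\,dx\le1\}$ and $L^\Lambda(\mathbb{R}^N)$ the corresponding Orlicz space. *)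

theory Defs
  imports "HOL-Analysis.Analysis"
begin

definition young_function :: "(real \<Rightarrow> real) \<Rightarrow> bool" where
  "young_function \<Lambda> \<longleftrightarrow>
     convex_on {0..} \<Lambda> \<and>
     (\<forall>t\<ge>0. \<Lambda> t \<ge> 0) \<and>
     (\<forall>t\<ge>0. \<Lambda> t = 0 \<longleftrightarrow> t = 0) \<and>
     ((\<lambda>t. \<Lambda> t / t) \<longlongrightarrow> 0) (at_right 0) \<and>
     filterlim (\<lambda>t. \<Lambda> t / t) at_top at_top"

definition young_less :: "(real \<Rightarrow> real) \<Rightarrow> (real \<Rightarrow> real) \<Rightarrow> bool" where
  "young_less \<Lambda> \<Theta> \<longleftrightarrow> (\<exists>c>0. \<exists>T>0. \<forall>t\<ge>T. \<Lambda> t \<le> \<Theta> (c * t))"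

definition orlicz_modular :: "(real \<Rightarrow> real) \<Rightarrow> ('a::euclidean_space \<Rightarrow> real) \<Rightarrow> real \<Rightarrow> ennreal" where
  "orlicz_modular \<Lambda> u \<tau> = (\<integral>\<^sup>+ x. ennreal (\<Lambda> (\<bar>u x\<bar> / \<tau>)) \<partial>lebesgue)"

definition luxemburg_norm :: "(real \<Rightarrow> real) \<Rightarrow> ('a::euclidean_space \<Rightarrow> real) \<Rightarrow> real" where
  "luxemburg_norm \<Lambda> u = Inf {\<tau>. \<tau> > 0 \<and> orlicz_modular \<Lambda> u \<tau> \<le> 1}"

definition orlicz_space :: "(real \<Rightarrow> real) \<Rightarrow> ('a::euclidean_space \<Rightarrow> real) set" where
  "orlicz_space \<Lambda> = {u. u \<in> borel_measurable lebesgue \<and> (\<exists>\<tau>>0. orlicz_modular \<Lambda> u \<tau> < \<infinity>)}"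

definition Linf_space :: "('a::euclidean_space \<Rightarrow> real) set" where
  "Linf_space = {h. h \<in> borel_measurable lebesgue \<and> (\<exists>B. AE x in lebesgue. \<bar>h x\<bar> \<le> B)}"

definition Linf_norm :: "('a::euclidean_space \<Rightarrow> real) \<Rightarrow> real" where
  "Linf_norm h = Inf {B. B \<ge> 0 \<and> (AE x in lebesgue. \<bar>h x\<bar> \<le> B)}"

definition L1_norm :: "('a::euclidean_space \<Rightarrow> real) \<Rightarrow> real" where
  "L1_norm h = (\<integral>x. \<bar>h x\<bar> \<partial>lebesgue)"

end

theory Submission
  imports Defs
begin

(* Because Lambda < Theta and Lambda is convex with Lambda 0 = 0, there are c > 0 and a >= 0 with
   Lambda t <= Theta (c t) + a t for all t >= 0 (the chord of Lambda on [0, T] handles small t).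
   Let |h| <= M a.e., v = |u| / sigma and C > c M + a M / Theta 1 + a ||h||_1.  In
   Lambda (|h| v / C) <= Theta (c |h| v / C) + a |h| v / C the first term is at most
   (c M / C) Theta v by convexity of Theta, and the second is split with v <= 1 + Theta v / Theta 1
   into a multiple of |h|, which is integrable, and a multiple of Theta v.  Integrating, the
   Lambda-modular of h u at scale C sigma is at most alpha * (Theta-modular of u at scale sigma)
   + beta with alpha + beta <= 1; so it is <= 1 whenever sigma exceeds the Luxemburg norm of u,
   which gives ||h u||_Lambda <= C ||u||_Theta. *)

lemma young_function_zero: "young_function F \<Longrightarrow> F 0 = 0"
  unfolding young_function_def by auto

lemma young_function_nonneg: "young_function F \<Longrightarrow> 0 \<le> t \<Longrightarrow> 0 \<le> F t"
  unfolding young_function_def by auto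

lemma young_function_pos: "young_function F \<Longrightarrow> 0 < t \<Longrightarrow> 0 < F t"
  unfolding young_function_def by (auto simp: less_le)

lemma young_function_scale_le:
  assumes "young_function F" "0 \<le> l" "l \<le> 1" "0 \<le> x"
  shows "F (l * x) \<le> l * F x"
proof -
  have "convex_on {0..} F" using assms(1) unfolding young_function_def by blast
  then have "F ((1 - l) *\<^sub>R 0 + l *\<^sub>R x) \<le> (1 - l) * F 0 + l * F x"
    by (rule convex_onD) (use assms in auto)
  then show ?thesis using young_function_zero[OF assms(1)] by simp
qed

lemma young_function_mono:
  assumes F: "young_function F" and "0 \<le> x" "x \<le> y"
  shows "F x \<le> F y"
proof (cases "y = 0")
  case True
  then show ?thesis using assms by simp
next
  case False
  with assms have y: "y > 0" by simp
  have "F ((x / y) * y) \<le> (x / y) * F y"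
    by (rule young_function_scale_le[OF F]) (use assms y in auto)
  also have "\<dots> \<le> F y"
    using assms y young_function_nonneg[OF F, of y] by (intro mult_left_le_one_le) auto
  finally show ?thesis using y by simp
qed

lemma young_function_le_one_plus:
  assumes F: "young_function F" and "0 \<le> v"
  shows "v \<le> 1 + F v / F 1"
proof (cases "v \<le> 1")
  case True
  moreover have "0 \<le> F v / F 1"
    using assms young_function_nonneg[OF F] young_function_pos[OF F, of 1] by simp
  ultimately show ?thesis by linarith
next
  case False
  have "F ((1 / v) * v) \<le> (1 / v) * F v"
    by (rule young_function_scale_le[OF F]) (use False in auto)
  then have "v \<le> F v / F 1"
    using False young_function_pos[OF F, of 1] by (simp add: field_simps)
  then show ?thesis by simp
qed

lemma young_function_borel_measurable:
  assumes F: "young_function F" and "f \<in> borel_measurable M" "\<And>x. 0 \<le> f x"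
  shows "(\<lambda>x. F (f x)) \<in> borel_measurable M"
proof -
  have "mono (\<lambda>t. F (max 0 t))"
    by (rule monoI) (auto intro: young_function_mono[OF F])
  then have "(\<lambda>t. F (max 0 t)) \<in> borel_measurable borel"
    by (rule borel_measurable_mono)
  from measurable_compose[OF assms(2) this] show ?thesis
    using assms(3) by (simp add: o_def max_absorb2)
qed

lemma young_less_le_linear:
  assumes L: "young_function \<Lambda>" and Th: "young_function \<Theta>" and "young_less \<Lambda> \<Theta>"
  obtains c a where "c > 0" "a \<ge> 0" "\<And>t. 0 \<le> t \<Longrightarrow> \<Lambda> t \<le> \<Theta> (c * t) + a * t"
proof -
  obtain c T where c: "c > 0" and T: "T > 0" and above: "\<And>t. t \<ge> T \<Longrightarrow> \<Lambda> t \<le> \<Theta> (c * t)"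
    using assms(3) unfolding young_less_def by blast
  define a where "a = \<Lambda> T / T"
  have a: "a \<ge> 0" unfolding a_def using young_function_nonneg[OF L, of T] T by simp
  have "\<Lambda> t \<le> \<Theta> (c * t) + a * t" if t: "0 \<le> t" for t
  proof (cases "t \<ge> T")
    case True
    moreover have "0 \<le> a * t" using a t by simp
    ultimately show ?thesis using above by fastforce
  next
    case False
    have "\<Lambda> t = \<Lambda> ((t / T) * T)" using T by simp
    also have "\<dots> \<le> (t / T) * \<Lambda> T"
      by (rule young_function_scale_le[OF L]) (use False T t in auto)
    also have "\<dots> = a * t" unfolding a_def by simp
    finally have "\<Lambda> t \<le> a * t" .
    moreover have "0 \<le> \<Theta> (c * t)" using young_function_nonneg[OF Th] c t by simp
    ultimately show ?thesis by linarith
  qed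
  with c a show ?thesis by (rule that)
qed

lemma orlicz_modular_antimono:
  assumes F: "young_function F" and "0 < s" "s \<le> t"
  shows "orlicz_modular F u t \<le> orlicz_modular F u s"
  unfolding orlicz_modular_def
proof (rule nn_integral_mono)
  fix x
  have "\<bar>u x\<bar> / t \<le> \<bar>u x\<bar> / s" using assms by (simp add: frac_le)
  then show "ennreal (F (\<bar>u x\<bar> / t)) \<le> ennreal (F (\<bar>u x\<bar> / s))"
    using young_function_mono[OF F] assms by (intro ennreal_leI) simp
qed

lemma orlicz_modular_scale_le:
  assumes F: "young_function F" and "u \<in> borel_measurable lebesgue" "t > 0" "K \<ge> 1"
  shows "orlicz_modular F u (K * t) \<le> ennreal (1 / K) * orlicz_modular F u t"
proof -
  have "orlicz_modular F u (K * t) = (\<integral>\<^sup>+ x. ennreal (F ((1 / K) * (\<bar>u x\<bar> / t))) \<partial>lebesgue)"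
    unfolding orlicz_modular_def by (simp add: field_simps)
  also have "\<dots> \<le> (\<integral>\<^sup>+ x. ennreal (1 / K) * ennreal (F (\<bar>u x\<bar> / t)) \<partial>lebesgue)"
  proof (rule nn_integral_mono)
    fix x
    have "F ((1 / K) * (\<bar>u x\<bar> / t)) \<le> (1 / K) * F (\<bar>u x\<bar> / t)"
      by (rule young_function_scale_le[OF F]) (use assms in auto)
    moreover have "ennreal (1 / K) * ennreal (F (\<bar>u x\<bar> / t)) = ennreal ((1 / K) * F (\<bar>u x\<bar> / t))"
      using assms young_function_nonneg[OF F, of "\<bar>u x\<bar> / t"] by (intro ennreal_mult[symmetric]) auto
    ultimately show "ennreal (F ((1 / K) * (\<bar>u x\<bar> / t))) \<le> ennreal (1 / K) * ennreal (F (\<bar>u x\<bar> / t))"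
      by (simp add: ennreal_leI)
  qed
  also have "\<dots> = ennreal (1 / K) * orlicz_modular F u t"
  proof -
    have "(\<lambda>x. F (\<bar>u x\<bar> / t)) \<in> borel_measurable lebesgue"
      using assms by (intro young_function_borel_measurable[OF F]) auto
    then show ?thesis unfolding orlicz_modular_def by (intro nn_integral_cmult) measurable
  qed
  finally show ?thesis .
qed

lemma orlicz_space_modular_le_one:
  assumes F: "young_function F" and u: "u \<in> orlicz_space F"
  shows "\<exists>\<tau>>0. orlicz_modular F u \<tau> \<le> 1"
proof -
  obtain t where t: "t > 0" "orlicz_modular F u t < \<infinity>" and um: "u \<in> borel_measurable lebesgue"
    using u unfolding orlicz_space_def by blast
  define m where "m = enn2real (orlicz_modular F u t)"
  define K where "K = max 1 m"
  have m: "orlicz_modular F u t = ennreal m" "m \<ge> 0"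
    unfolding m_def using t(2) by (auto simp: less_top)
  have K: "K \<ge> 1" "m \<le> K" unfolding K_def by auto
  have "orlicz_modular F u (K * t) \<le> ennreal (1 / K) * ennreal m"
    using orlicz_modular_scale_le[OF F um t(1) K(1)] m by simp
  also have "\<dots> = ennreal (m / K)" using K m by (simp add: ennreal_mult[symmetric])
  also have "\<dots> \<le> 1" using K by simp
  finally show ?thesis using t K by (intro exI[of _ "K * t"]) auto
qed

lemma luxemburg_norm_nonneg:
  assumes "young_function F" "u \<in> orlicz_space F"
  shows "0 \<le> luxemburg_norm F u"
  unfolding luxemburg_norm_def using orlicz_space_modular_le_one[OF assms]
  by (auto intro: cInf_greatest)

lemma orlicz_modular_le_one_above_norm:
  assumes F: "young_function F" and u: "u \<in> orlicz_space F" and "luxemburg_norm F u < \<sigma>"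
  shows "orlicz_modular F u \<sigma> \<le> 1"
proof -
  obtain \<tau> where "\<tau> > 0" "orlicz_modular F u \<tau> \<le> 1" "\<tau> < \<sigma>"
    using cInf_lessD[of "{\<tau>. \<tau> > 0 \<and> orlicz_modular F u \<tau> \<le> 1}" \<sigma>]
      orlicz_space_modular_le_one[OF F u] assms(3)
    unfolding luxemburg_norm_def by blast
  then show ?thesis using orlicz_modular_antimono[OF F, of \<tau> \<sigma> u] by simp
qed

lemma luxemburg_norm_le:
  assumes "0 \<le> s" "\<And>\<sigma>. s < \<sigma> \<Longrightarrow> orlicz_modular F w \<sigma> \<le> 1"
  shows "luxemburg_norm F w \<le> s"
proof (rule dense_ge)
  fix \<sigma> assume "s < \<sigma>"
  with assms show "luxemburg_norm F w \<le> \<sigma>"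
    unfolding luxemburg_norm_def by (intro cInf_lower bdd_belowI[of _ 0]) auto
qed

lemma luxemburg_norm_le_mult:
  assumes Th: "young_function \<Theta>" and u: "u \<in> orlicz_space \<Theta>"
    and w: "w \<in> borel_measurable lebesgue" and K: "K > 0"
    and modular: "\<And>\<sigma>. \<sigma> > 0 \<Longrightarrow> orlicz_modular \<Theta> u \<sigma> \<le> 1 \<Longrightarrow> orlicz_modular \<Lambda> w (K * \<sigma>) \<le> 1"
  shows "w \<in> orlicz_space \<Lambda>" "luxemburg_norm \<Lambda> w \<le> K * luxemburg_norm \<Theta> u"
proof -
  have s: "0 \<le> luxemburg_norm \<Theta> u" using luxemburg_norm_nonneg[OF Th u] .
  have scaled: "orlicz_modular \<Lambda> w (K * \<sigma>) \<le> 1" if "luxemburg_norm \<Theta> u < \<sigma>" for \<sigma>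
    using modular orlicz_modular_le_one_above_norm[OF Th u that] s that by simp
  have "orlicz_modular \<Lambda> w (K * (luxemburg_norm \<Theta> u + 1)) < \<infinity>"
    using scaled[of "luxemburg_norm \<Theta> u + 1"] by (simp add: le_less_trans)
  then show "w \<in> orlicz_space \<Lambda>"
    unfolding orlicz_space_def using w K s by (auto intro!: exI[of _ "K * (luxemburg_norm \<Theta> u + 1)"])
  show "luxemburg_norm \<Lambda> w \<le> K * luxemburg_norm \<Theta> u"
  proof (rule luxemburg_norm_le)
    fix \<sigma> assume "K * luxemburg_norm \<Theta> u < \<sigma>"
    then have "luxemburg_norm \<Theta> u < \<sigma> / K" using K by (simp add: field_simps)
    from scaled[OF this] show "orlicz_modular \<Lambda> w \<sigma> \<le> 1" using K by simp
  qed (use K s in simp)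
qed

lemma
  fixes h :: "'a::euclidean_space \<Rightarrow> real"
  assumes "h \<in> Linf_space"
  shows Linf_norm_nonneg: "0 \<le> Linf_norm h"
    and AE_abs_le_Linf_norm: "AE x in lebesgue. \<bar>h x\<bar> \<le> Linf_norm h"
proof -
  let ?S = "{B. B \<ge> 0 \<and> (AE x in lebesgue. \<bar>h x\<bar> \<le> B)}"
  obtain B where "AE x in lebesgue. \<bar>h x\<bar> \<le> B" using assms unfolding Linf_space_def by blast
  then have "max B 0 \<in> ?S" by (auto elim: eventually_mono)
  then have ne: "?S \<noteq> {}" by blast
  then show "0 \<le> Linf_norm h" unfolding Linf_norm_def by (auto intro: cInf_greatest)
  have "\<forall>n. AE x in lebesgue. \<bar>h x\<bar> \<le> Linf_norm h + inverse (real (Suc n))"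
  proof
    fix n
    have "Inf ?S < Linf_norm h + inverse (real (Suc n))" unfolding Linf_norm_def by simp
    then obtain b where "b \<in> ?S" "b < Linf_norm h + inverse (real (Suc n))"
      using cInf_lessD[OF ne] by blast
    then show "AE x in lebesgue. \<bar>h x\<bar> \<le> Linf_norm h + inverse (real (Suc n))"
      by (auto elim: eventually_mono)
  qed
  then have "AE x in lebesgue. \<forall>n. \<bar>h x\<bar> \<le> Linf_norm h + inverse (real (Suc n))"
    by (simp add: AE_all_countable)
  then show "AE x in lebesgue. \<bar>h x\<bar> \<le> Linf_norm h"
  proof (rule eventually_mono)
    fix x assume bound: "\<forall>n. \<bar>h x\<bar> \<le> Linf_norm h + inverse (real (Suc n))"
    show "\<bar>h x\<bar> \<le> Linf_norm h"
    proof (rule ccontr)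
      assume "\<not> ?thesis"
      then obtain n where "inverse (real (Suc n)) < \<bar>h x\<bar> - Linf_norm h"
        using reals_Archimedean[of "\<bar>h x\<bar> - Linf_norm h"] by auto
      then show False using bound[rule_format, of n] by simp
    qed
  qed
qed

lemma L1_norm_nonneg: "0 \<le> L1_norm h"
  unfolding L1_norm_def by simp

lemma young_product_le:
  assumes Th: "young_function \<Theta>"
    and lin: "\<And>t. 0 \<le> t \<Longrightarrow> \<Lambda> t \<le> \<Theta> (c * t) + a * t" and "c \<ge> 0" "a \<ge> 0"
    and "0 \<le> \<eta>" "\<eta> \<le> M" "0 \<le> v" "C > 0" "c * M \<le> C"
  shows "\<Lambda> (\<eta> * v / C) \<le> (c * M + a * M / \<Theta> 1) / C * \<Theta> v + a / C * \<eta>"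
proof -
  have Th1: "\<Theta> 1 > 0" using young_function_pos[OF Th] by simp
  have Thv: "0 \<le> \<Theta> v" using young_function_nonneg[OF Th] assms by simp
  have "c * \<eta> \<le> c * M" using assms by (simp add: mult_left_mono)
  then have "c * \<eta> / C \<le> 1" using assms by (simp add: pos_divide_le_eq)
  then have "\<Theta> ((c * \<eta> / C) * v) \<le> (c * \<eta> / C) * \<Theta> v"
    using assms by (intro young_function_scale_le[OF Th]) auto
  also have "\<dots> \<le> (c * M / C) * \<Theta> v"
    using assms Thv by (intro mult_right_mono divide_right_mono mult_left_mono) auto
  finally have convex_part: "\<Theta> (c * (\<eta> * v / C)) \<le> (c * M / C) * \<Theta> v"
    by (simp add: algebra_simps)
  have "\<eta> * v \<le> \<eta> * (1 + \<Theta> v / \<Theta> 1)"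
    using young_function_le_one_plus[OF Th] assms by (simp add: mult_left_mono)
  also have "\<dots> \<le> \<eta> + M * \<Theta> v / \<Theta> 1"
    using assms Th1 Thv by (simp add: distrib_left mult_right_mono divide_right_mono)
  finally have "a * (\<eta> * v / C) \<le> a / C * (\<eta> + M * \<Theta> v / \<Theta> 1)"
    using assms by (simp add: mult_left_mono divide_right_mono)
  with convex_part lin[of "\<eta> * v / C"] assms
  have "\<Lambda> (\<eta> * v / C) \<le> (c * M / C) * \<Theta> v + a / C * (\<eta> + M * \<Theta> v / \<Theta> 1)" by simp
  also have "\<dots> = (c * M + a * M / \<Theta> 1) / C * \<Theta> v + a / C * \<eta>"
    using assms Th1 by (simp add: field_simps)
  finally show ?thesis .
qed

lemma orlicz_modular_mult_le:
  fixes h u :: "'a::euclidean_space \<Rightarrow> real"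
  assumes Th: "young_function \<Theta>"
    and lin: "\<And>t. 0 \<le> t \<Longrightarrow> \<Lambda> t \<le> \<Theta> (c * t) + a * t" and "c \<ge> 0" "a \<ge> 0"
    and h: "integrable lebesgue h" and M: "AE x in lebesgue. \<bar>h x\<bar> \<le> M"
    and u: "u \<in> borel_measurable lebesgue" and "\<sigma> > 0" "C > 0" "c * M \<le> C"
  shows "orlicz_modular \<Lambda> (\<lambda>x. h x * u x) (C * \<sigma>)
           \<le> ennreal ((c * M + a * M / \<Theta> 1) / C) * orlicz_modular \<Theta> u \<sigma> + ennreal (a / C * L1_norm h)"
proof -
  define \<alpha> where "\<alpha> = (c * M + a * M / \<Theta> 1) / C"
  define v where "v x = \<bar>u x\<bar> / \<sigma>" for x
  have v: "0 \<le> v x" for x unfolding v_def using assms by simp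
  have pointwise: "ennreal (\<Lambda> (\<bar>h x * u x\<bar> / (C * \<sigma>)))
      \<le> ennreal \<alpha> * ennreal (\<Theta> (v x)) + ennreal (a / C) * ennreal \<bar>h x\<bar>"
    if hx: "\<bar>h x\<bar> \<le> M" for x
  proof -
    have "\<alpha> \<ge> 0" unfolding \<alpha>_def using hx assms young_function_pos[OF Th, of 1] by simp
    have "\<Lambda> (\<bar>h x * u x\<bar> / (C * \<sigma>)) = \<Lambda> (\<bar>h x\<bar> * v x / C)"
      unfolding v_def by (simp add: abs_mult mult.commute)
    also have "\<dots> \<le> \<alpha> * \<Theta> (v x) + a / C * \<bar>h x\<bar>"
      unfolding \<alpha>_def using assms hx v by (intro young_product_le[OF Th lin]) auto
    also have "ennreal \<dots> = ennreal \<alpha> * ennreal (\<Theta> (v x)) + ennreal (a / C) * ennreal \<bar>h x\<bar>"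
      using \<open>\<alpha> \<ge> 0\<close> young_function_nonneg[OF Th v] assms
      by (simp add: ennreal_mult del: times_divide_eq_left)
    finally show ?thesis by (simp add: ennreal_leI)
  qed
  have meas: "(\<lambda>x. \<Theta> (v x)) \<in> borel_measurable lebesgue" "h \<in> borel_measurable lebesgue"
    using u h v unfolding v_def by (auto intro: young_function_borel_measurable[OF Th])
  have "orlicz_modular \<Lambda> (\<lambda>x. h x * u x) (C * \<sigma>)
      \<le> (\<integral>\<^sup>+ x. ennreal \<alpha> * ennreal (\<Theta> (v x)) + ennreal (a / C) * ennreal \<bar>h x\<bar> \<partial>lebesgue)"
    unfolding orlicz_modular_def using M by (intro nn_integral_mono_AE) (auto elim: eventually_mono pointwise)
  also have "\<dots> = ennreal \<alpha> * (\<integral>\<^sup>+ x. ennreal (\<Theta> (v x)) \<partial>lebesgue)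
      + ennreal (a / C) * (\<integral>\<^sup>+ x. ennreal \<bar>h x\<bar> \<partial>lebesgue)"
    using meas by (simp add: nn_integral_add nn_integral_cmult)
  also have "(\<integral>\<^sup>+ x. ennreal (\<Theta> (v x)) \<partial>lebesgue) = orlicz_modular \<Theta> u \<sigma>"
    unfolding orlicz_modular_def v_def ..
  also have "(\<integral>\<^sup>+ x. ennreal \<bar>h x\<bar> \<partial>lebesgue) = ennreal (L1_norm h)"
    unfolding L1_norm_def using h by (intro nn_integral_eq_integral) auto
  also have "ennreal (a / C) * ennreal (L1_norm h) = ennreal (a / C * L1_norm h)"
    using assms L1_norm_nonneg by (intro ennreal_mult[symmetric]) auto
  finally show ?thesis unfolding \<alpha>_def .
qed

lemma orlicz_modular_mult_le_one:
  fixes h u :: "'a::euclidean_space \<Rightarrow> real"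
  assumes Th: "young_function \<Theta>"
    and lin: "\<And>t. 0 \<le> t \<Longrightarrow> \<Lambda> t \<le> \<Theta> (c * t) + a * t" and "c \<ge> 0" "a \<ge> 0"
    and h: "integrable lebesgue h" "h \<in> Linf_space"
    and u: "u \<in> borel_measurable lebesgue" "\<sigma> > 0" "orlicz_modular \<Theta> u \<sigma> \<le> 1"
    and C: "c * Linf_norm h + a * Linf_norm h / \<Theta> 1 + a * L1_norm h < C"
  shows "orlicz_modular \<Lambda> (\<lambda>x. h x * u x) (C * \<sigma>) \<le> 1"
proof -
  define M where "M = Linf_norm h"
  define \<alpha> where "\<alpha> = (c * M + a * M / \<Theta> 1) / C"
  define \<beta> where "\<beta> = a / C * L1_norm h"
  have M: "0 \<le> M" "AE x in lebesgue. \<bar>h x\<bar> \<le> M"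
    unfolding M_def using Linf_norm_nonneg[OF h(2)] AE_abs_le_Linf_norm[OF h(2)] by auto
  have C': "c * M + a * M / \<Theta> 1 + a * L1_norm h < C" using C unfolding M_def .
  have "0 \<le> c * M" "0 \<le> a * M / \<Theta> 1" "0 \<le> a * L1_norm h"
    using assms M young_function_pos[OF Th, of 1] L1_norm_nonneg[of h] by auto
  with C' have "C > 0" "c * M \<le> C" by linarith+
  then have \<alpha>\<beta>: "0 \<le> \<alpha>" "0 \<le> \<beta>"
    unfolding \<alpha>_def \<beta>_def using \<open>0 \<le> c * M\<close> \<open>0 \<le> a * M / \<Theta> 1\<close> \<open>0 \<le> a * L1_norm h\<close> by simp_all
  have "\<alpha> + \<beta> = (c * M + a * M / \<Theta> 1 + a * L1_norm h) / C"
    unfolding \<alpha>_def \<beta>_def by (simp add: add_divide_distrib)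
  with C' \<open>C > 0\<close> have "\<alpha> + \<beta> \<le> 1" by simp
  have "orlicz_modular \<Lambda> (\<lambda>x. h x * u x) (C * \<sigma>) \<le> ennreal \<alpha> * orlicz_modular \<Theta> u \<sigma> + ennreal \<beta>"
    unfolding \<alpha>_def \<beta>_def using assms M \<open>C > 0\<close> \<open>c * M \<le> C\<close>
    by (intro orlicz_modular_mult_le[OF Th lin]) auto
  also have "\<dots> \<le> ennreal \<alpha> + ennreal \<beta>"
    using mult_left_mono[OF u(3), of "ennreal \<alpha>"] by (simp add: add_right_mono)
  also have "\<dots> = ennreal (\<alpha> + \<beta>)" using \<alpha>\<beta> by simp
  also have "\<dots> \<le> 1" using \<open>\<alpha> + \<beta> \<le> 1\<close> by simp
  finally show ?thesis .
qed

theorem proposition2p15: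
  fixes \<Lambda> \<Theta> :: "real \<Rightarrow> real"
  assumes "young_function \<Lambda>" and "young_function \<Theta>" and "young_less \<Lambda> \<Theta>"
  shows "\<exists>C :: real \<Rightarrow> real \<Rightarrow> real.
           \<forall>h :: 'a::euclidean_space \<Rightarrow> real.
             integrable lebesgue h \<and> h \<in> Linf_space \<longrightarrow>
             C (L1_norm h) (Linf_norm h) > 0 \<and>
             (\<forall>u \<in> orlicz_space \<Theta>.
                (\<lambda>x. h x * u x) \<in> orlicz_space \<Lambda> \<and>
                luxemburg_norm \<Lambda> (\<lambda>x. h x * u x)
                  \<le> C (L1_norm h) (Linf_norm h) * luxemburg_norm \<Theta> u)"
proof -
  obtain c a where c: "c > 0" and a: "a \<ge> 0" and lin: "\<And>t. 0 \<le> t \<Longrightarrow> \<Lambda> t \<le> \<Theta> (c * t) + a * t"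
    using young_less_le_linear[OF assms] by blast
  define C where "C A M = c * M + a * M / \<Theta> 1 + a * A + 1" for A M
  show ?thesis
  proof (intro exI[of _ C] allI impI conjI ballI)
    fix h :: "'a \<Rightarrow> real" assume h: "integrable lebesgue h \<and> h \<in> Linf_space"
    have "0 \<le> Linf_norm h" "0 \<le> L1_norm h" "0 < \<Theta> 1"
      using h Linf_norm_nonneg L1_norm_nonneg young_function_pos[OF assms(2)] by auto
    then show C_pos: "C (L1_norm h) (Linf_norm h) > 0"
      unfolding C_def using c a
      by (intro add_nonneg_pos add_nonneg_nonneg mult_nonneg_nonneg divide_nonneg_pos) auto
    fix u :: "'a \<Rightarrow> real" assume u: "u \<in> orlicz_space \<Theta>"
    have um: "u \<in> borel_measurable lebesgue" using u unfolding orlicz_space_def by blast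
    with h have meas: "(\<lambda>x. h x * u x) \<in> borel_measurable lebesgue" by auto
    have modular: "orlicz_modular \<Lambda> (\<lambda>x. h x * u x) (C (L1_norm h) (Linf_norm h) * \<sigma>) \<le> 1"
      if "\<sigma> > 0" "orlicz_modular \<Theta> u \<sigma> \<le> 1" for \<sigma>
      using h c by (intro orlicz_modular_mult_le_one[OF assms(2) lin _ a _ _ um that])
        (auto simp: C_def)
    show "(\<lambda>x. h x * u x) \<in> orlicz_space \<Lambda>"
      using modular by (rule luxemburg_norm_le_mult(1)[OF assms(2) u meas C_pos])
    show "luxemburg_norm \<Lambda> (\<lambda>x. h x * u x) \<le> C (L1_norm h) (Linf_norm h) * luxemburg_norm \<Theta> u"
      using modular by (rule luxemburg_norm_le_mult(2)[OF assms(2) u meas C_pos])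
  qed
qed

end
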